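(* Let $(Q,f)$ be a triangulation quiver with at least three vertices. The following are equivalent: (i) $(Q,f)$ is the tetrahedral triangulation quiver; (ii) $n_\alpha=3$ for every arrow $\alpha\in Q_1$; (iii) $g^3$ is the identity on $Q_1$; (iv) there is an arrow $\beta\in Q_1$ with $n_\beta=n_{\bar\beta}=n_{f(\beta)}=n_{f(\bar\beta)}=3$.
   Context: A triangulation quiver is $(Q,f)$ with $Q$ a finite connected quiver, each vertex the source and target of exactly two arrows, and $f$ a permutation of $Q_1$ with $s(f(\alpha))=t(\alpha)$ and $f^3=\mathrm{id}$. For $\alpha\in Q_1$, $\bar\alpha$ is the other arrow with source $s(\alpha)$, $g(\alpha)=\overline{f(\alpha)}$, and $n_\alpha$ is the size of the $g$-orbit of $\alpha$. The tetrahedral triangulation quiver has vertices $1,\dots,6$, arrows $\alpha:3\to1,\beta:4\to2,\gamma:4\to1,\delta:1\to5,\varepsilon:2\to5,\eta:5\to4,\xi:5\to3,\varrho:2\to6,\sigma:3\to2,\mu:6\to3,\nu:1\to6,\omega:6\to4$ and $f$-orbits $(\alpha\,\nu\,\mu),(\beta\,\varrho\,\omega),(\gamma\,\delta\,\eta),(\varepsilon\,\xi\,\sigma)$; (i) means isomorphic to it as a quiver with permutation. *)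

theory Defs
  imports Main
begin

definition quiver_connected :: "'v set \<Rightarrow> 'a set \<Rightarrow> ('a \<Rightarrow> 'v) \<Rightarrow> ('a \<Rightarrow> 'v) \<Rightarrow> bool" where
  "quiver_connected V A s t \<longleftrightarrow>
     (\<forall>u\<in>V. \<forall>w\<in>V. (u, w) \<in> ({(s a, t a) | a. a \<in> A} \<union> {(t a, s a) | a. a \<in> A})\<^sup>*)"

definition triangulation_quiver ::
  "'v set \<Rightarrow> 'a set \<Rightarrow> ('a \<Rightarrow> 'v) \<Rightarrow> ('a \<Rightarrow> 'v) \<Rightarrow> ('a \<Rightarrow> 'a) \<Rightarrow> bool" where
  "triangulation_quiver V A s t f \<longleftrightarrow>
     finite V \<and> finite A \<and> V \<noteq> {} \<and>
     (\<forall>a\<in>A. s a \<in> V \<and> t a \<in> V) \<and>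
     quiver_connected V A s t \<and>
     (\<forall>v\<in>V. card {a\<in>A. s a = v} = 2 \<and> card {a\<in>A. t a = v} = 2) \<and>
     bij_betw f A A \<and>
     (\<forall>a\<in>A. s (f a) = t a) \<and>
     (\<forall>a\<in>A. f (f (f a)) = a)"

definition bar :: "'a set \<Rightarrow> ('a \<Rightarrow> 'v) \<Rightarrow> 'a \<Rightarrow> 'a" where
  "bar A s a = (THE b. b \<in> A \<and> s b = s a \<and> b \<noteq> a)"

definition gperm :: "'a set \<Rightarrow> ('a \<Rightarrow> 'v) \<Rightarrow> ('a \<Rightarrow> 'a) \<Rightarrow> 'a \<Rightarrow> 'a" where
  "gperm A s f a = bar A s (f a)"

definition norb :: "'a set \<Rightarrow> ('a \<Rightarrow> 'v) \<Rightarrow> ('a \<Rightarrow> 'a) \<Rightarrow> 'a \<Rightarrow> nat" where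
  "norb A s f a = card {(gperm A s f ^^ k) a | k. True}"

definition tq_iso ::
  "'v set \<Rightarrow> 'a set \<Rightarrow> ('a \<Rightarrow> 'v) \<Rightarrow> ('a \<Rightarrow> 'v) \<Rightarrow> ('a \<Rightarrow> 'a) \<Rightarrow>
   'w set \<Rightarrow> 'b set \<Rightarrow> ('b \<Rightarrow> 'w) \<Rightarrow> ('b \<Rightarrow> 'w) \<Rightarrow> ('b \<Rightarrow> 'b) \<Rightarrow> bool" where
  "tq_iso V A s t f V' A' s' t' f' \<longleftrightarrow>
     (\<exists>\<phi> \<psi>. bij_betw \<phi> V V' \<and> bij_betw \<psi> A A' \<and>
        (\<forall>a\<in>A. s' (\<psi> a) = \<phi> (s a) \<and> t' (\<psi> a) = \<phi> (t a) \<and> \<psi> (f a) = f' (\<psi> (a))))"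

datatype tarrow = T_alpha | T_beta | T_gamma | T_delta | T_eps | T_eta | T_xi
  | T_rho | T_sigma | T_mu | T_nu | T_omega

fun tet_s :: "tarrow \<Rightarrow> nat" where
  "tet_s T_alpha = 3" | "tet_s T_beta = 4" | "tet_s T_gamma = 4" | "tet_s T_delta = 1"
| "tet_s T_eps = 2" | "tet_s T_eta = 5" | "tet_s T_xi = 5" | "tet_s T_rho = 2"
| "tet_s T_sigma = 3" | "tet_s T_mu = 6" | "tet_s T_nu = 1" | "tet_s T_omega = 6"

fun tet_t :: "tarrow \<Rightarrow> nat" where
  "tet_t T_alpha = 1" | "tet_t T_beta = 2" | "tet_t T_gamma = 1" | "tet_t T_delta = 5"
| "tet_t T_eps = 5" | "tet_t T_eta = 4" | "tet_t T_xi = 3" | "tet_t T_rho = 6"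
| "tet_t T_sigma = 2" | "tet_t T_mu = 3" | "tet_t T_nu = 6" | "tet_t T_omega = 4"

fun tet_f :: "tarrow \<Rightarrow> tarrow" where
  "tet_f T_alpha = T_nu" | "tet_f T_nu = T_mu" | "tet_f T_mu = T_alpha"
| "tet_f T_beta = T_rho" | "tet_f T_rho = T_omega" | "tet_f T_omega = T_beta"
| "tet_f T_gamma = T_delta" | "tet_f T_delta = T_eta" | "tet_f T_eta = T_gamma"
| "tet_f T_eps = T_xi" | "tet_f T_xi = T_sigma" | "tet_f T_sigma = T_eps"

definition is_tetrahedral ::
  "'v set \<Rightarrow> 'a set \<Rightarrow> ('a \<Rightarrow> 'v) \<Rightarrow> ('a \<Rightarrow> 'v) \<Rightarrow> ('a \<Rightarrow> 'a) \<Rightarrow> bool" where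
  "is_tetrahedral V A s t f \<longleftrightarrow> tq_iso V A s t f {1..6::nat} UNIV tet_s tet_t tet_f"

end

theory Submission
  imports Defs
begin

(* If the g-orbits of b, bar b, f b and f (bar b) all have length 3, the relations
   g = bar o f, bar^2 = id and f^3 = id force these twelve arrows to multiply exactly like the
   arrows of the tetrahedral quiver: sending the tetrahedral arrows to them gives a map that
   commutes with f and bar.  Such a map is onto by connectedness, and it is injective because
   g has no fixed points or 2-cycles on its image; hence it is an isomorphism.  Finally, if g^3 = id but g fixed an arrow c, the
   same construction based at c collapses every arrow onto two vertices, so |V| <= 2. *)

lemma funpow_orbit_subset:
  assumes "a \<in> X" and "g ` X \<subseteq> X"
  shows "{(g ^^ k) a | k. True} \<subseteq> X"
proof -
  have "(g ^^ k) a \<in> X" for k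
    by (induction k) (use assms in auto)
  then show ?thesis by blast
qed

lemma card_funpow_orbit_eq_3_iff:
  assumes inj: "inj_on g S" and closed: "g ` S \<subseteq> S" and a: "a \<in> S"
  shows "card {(g ^^ k) a | k. True} = 3 \<longleftrightarrow> g (g (g a)) = a \<and> g a \<noteq> a"
    (is "card ?O = 3 \<longleftrightarrow> _")
proof -
  have first3: "{a, g a, g (g a)} \<subseteq> ?O"
  proof -
    have "a = (g ^^ 0) a" "g a = (g ^^ 1) a" "g (g a) = (g ^^ 2) a"
      by (simp_all add: numeral_2_eq_2)
    then show ?thesis by blast
  qed
  show ?thesis
  proof
    assume card_O: "card ?O = 3"
    then have fin: "finite ?O" using card.infinite by force
    have le2: "card ?O \<le> 2" if "g ` {a, g a} \<subseteq> {a, g a}"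
    proof -
      have "card ?O \<le> card {a, g a}"
        using card_mono[OF _ funpow_orbit_subset[OF _ that]] by simp
      also have "\<dots> \<le> 2" by (simp add: card_insert_if)
      finally show ?thesis .
    qed
    have ga: "g a \<noteq> a" and gga: "g (g a) \<noteq> a" "g (g a) \<noteq> g a"
      using le2 card_O by force+
    have "?O = {a, g a, g (g a)}"
      using card_subset_eq[OF fin first3] card_O ga gga by simp
    moreover have "g (g (g a)) = (g ^^ 3) a" by (simp add: numeral_3_eq_3)
    ultimately have "g (g (g a)) \<in> {a, g a, g (g a)}" by blast
    moreover have "g (g (g a)) \<noteq> g a" "g (g (g a)) \<noteq> g (g a)"
      using inj_onD[OF inj] a closed ga gga by (metis image_subset_iff)+
    ultimately show "g (g (g a)) = a \<and> g a \<noteq> a" using ga by blast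
  next
    assume g3: "g (g (g a)) = a \<and> g a \<noteq> a"
    then have "?O = {a, g a, g (g a)}"
      using funpow_orbit_subset[of a "{a, g a, g (g a)}" g] first3 by auto
    moreover have "g (g a) \<noteq> a" "g (g a) \<noteq> g a" using g3 by metis+
    ultimately show "card ?O = 3" using g3 by (auto simp: card_insert_if)
  qed
qed

fun apply_word :: "('x \<Rightarrow> 'x) \<Rightarrow> ('x \<Rightarrow> 'x) \<Rightarrow> bool list \<Rightarrow> 'x \<Rightarrow> 'x" where
  "apply_word F H [] x = x"
| "apply_word F H (c # w) x = (if c then F else H) (apply_word F H w x)"

lemma apply_word_hom:
  assumes "\<And>x. \<psi> (F x) = F' (\<psi> x)" and "\<And>x. \<psi> (H x) = H' (\<psi> x)"
  shows "\<psi> (apply_word F H w x) = apply_word F' H' w (\<psi> x)"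
  by (induction w) (auto simp: assms)

fun tet_bar :: "tarrow \<Rightarrow> tarrow" where
  "tet_bar T_delta = T_nu" | "tet_bar T_nu = T_delta"
| "tet_bar T_eps = T_rho" | "tet_bar T_rho = T_eps"
| "tet_bar T_alpha = T_sigma" | "tet_bar T_sigma = T_alpha"
| "tet_bar T_beta = T_gamma" | "tet_bar T_gamma = T_beta"
| "tet_bar T_eta = T_xi" | "tet_bar T_xi = T_eta"
| "tet_bar T_mu = T_omega" | "tet_bar T_omega = T_mu"

definition tet_g :: "tarrow \<Rightarrow> tarrow" where
  "tet_g x = tet_bar (tet_f x)"

lemma tet_s_eq_iff: "tet_s y = tet_s x \<longleftrightarrow> y = x \<or> y = tet_bar x"
  by (cases x; cases y; simp)

lemma tet_s_tet_f: "tet_s (tet_f x) = tet_t x"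
  by (cases x; simp)

lemma tet_g_cube: "tet_g (tet_g (tet_g x)) = x"
  by (cases x; simp add: tet_g_def)

lemma tet_g_neq: "tet_g x \<noteq> x"
  by (cases x; simp add: tet_g_def)

lemma range_tet_s: "range tet_s = {1..6}"
proof
  have "tet_s x \<in> {1..6}" for x
    by (cases x) simp_all
  then show "range tet_s \<subseteq> {1..6}" by blast
  have "{1..6::nat} = {1, 2, 3, 4, 5, 6}" by auto
  also have "\<dots> = tet_s ` {T_delta, T_eps, T_alpha, T_beta, T_eta, T_mu}" by simp
  finally show "{1..6} \<subseteq> range tet_s" by blast
qed

lemma tet_distinct_pair_word:
  assumes "x \<noteq> y"
  shows "\<exists>w\<in>{[], [True], [True, True], [True, False]}.
     apply_word tet_f tet_bar w y \<in> {tet_bar (apply_word tet_f tet_bar w x),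
       tet_g (apply_word tet_f tet_bar w x), tet_g (tet_g (apply_word tet_f tet_bar w x))}"
  using assms by (cases x; cases y; simp add: tet_g_def)

locale triangulation =
  fixes V :: "'v set" and A :: "'a set" and s t :: "'a \<Rightarrow> 'v" and f :: "'a \<Rightarrow> 'a"
  assumes triangulation: "triangulation_quiver V A s t f"
begin

abbreviation "B \<equiv> bar A s"
abbreviation "G \<equiv> gperm A s f"

lemma ends_in_V: "a \<in> A \<Longrightarrow> s a \<in> V \<and> t a \<in> V"
  and connected: "quiver_connected V A s t"
  and card_out_arrows: "v \<in> V \<Longrightarrow> card {a\<in>A. s a = v} = 2"
  and bij_f: "bij_betw f A A"
  and source_f: "a \<in> A \<Longrightarrow> s (f a) = t a"
  and f_cube: "a \<in> A \<Longrightarrow> f (f (f a)) = a"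
  using triangulation unfolding triangulation_quiver_def by auto

lemma f_in: "a \<in> A \<Longrightarrow> f a \<in> A"
  using bij_f by (meson bij_betwE)

lemma f_inj: "a \<in> A \<Longrightarrow> c \<in> A \<Longrightarrow> f a = f c \<Longrightarrow> a = c"
  using bij_f by (meson bij_betw_imp_inj_on inj_onD)

lemma out_arrows_eq:
  assumes "a \<in> A"
  obtains d where "{c\<in>A. s c = s a} = {a, d}" and "d \<noteq> a"
proof -
  have "card {c\<in>A. s c = s a} = 2" using card_out_arrows ends_in_V assms by blast
  then obtain p q where pq: "{c\<in>A. s c = s a} = {p, q}" "p \<noteq> q" by (meson card_2_iff)
  then have "a = p \<or> a = q" using assms by blast
  then show thesis using pq that by (metis insert_commute)
qed

lemma bar_in: "a \<in> A \<Longrightarrow> B a \<in> A"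
  and source_bar: "a \<in> A \<Longrightarrow> s (B a) = s a"
  and bar_neq: "a \<in> A \<Longrightarrow> B a \<noteq> a"
  and source_eq_iff: "a \<in> A \<Longrightarrow> c \<in> A \<Longrightarrow> s c = s a \<longleftrightarrow> c = a \<or> c = B a"
proof -
  fix a assume a: "a \<in> A"
  obtain d where d: "{c\<in>A. s c = s a} = {a, d}" "d \<noteq> a" using out_arrows_eq[OF a] .
  have "B a = d" unfolding bar_def by (rule the_equality) (use d in auto)
  then show "B a \<in> A" "s (B a) = s a" "B a \<noteq> a" using d by auto
  fix c assume "c \<in> A"
  then show "s c = s a \<longleftrightarrow> c = a \<or> c = B a" using d \<open>B a = d\<close> by auto
qed

lemma bar_bar: "a \<in> A \<Longrightarrow> B (B a) = a"
  using source_eq_iff[of "B a" a] bar_in source_bar bar_neq by metis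

lemma V_eq_sources: "V = s ` A"
proof
  show "s ` A \<subseteq> V" using ends_in_V by blast
  show "V \<subseteq> s ` A"
  proof
    fix v assume "v \<in> V"
    then have "{a\<in>A. s a = v} \<noteq> {}"
      using card_out_arrows by (metis card.empty zero_neq_numeral)
    then show "v \<in> s ` A" by blast
  qed
qed

lemma bar_f: "B (f a) = G a"
  by (simp add: gperm_def)

lemma gperm_in: "a \<in> A \<Longrightarrow> G a \<in> A"
  by (simp add: gperm_def bar_in f_in)

lemma inj_on_gperm: "inj_on G A"
  by (intro inj_onI) (metis bar_f bar_bar f_in f_inj)

lemma bar_gperm: "a \<in> A \<Longrightarrow> B (G a) = f a"
  by (metis bar_f bar_bar f_in)

lemma norb_eq_3_iff: "a \<in> A \<Longrightarrow> norb A s f a = 3 \<longleftrightarrow> G (G (G a)) = a \<and> G a \<noteq> a"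
  unfolding norb_def using card_funpow_orbit_eq_3_iff[OF inj_on_gperm] gperm_in by blast

lemma gperm_orbit_distinct:
  assumes "a \<in> A" "G (G (G a)) = a" "G a \<noteq> a" and "y \<in> {a, G a, G (G a)}"
  shows "G y \<noteq> y" "G (G y) \<noteq> y"
proof -
  have "G (G a) \<noteq> a" using assms(2,3) by metis
  moreover have "G (G a) \<noteq> G a"
    using assms(1,3) inj_onD[OF inj_on_gperm, of "G a" a] gperm_in by blast
  ultimately show "G y \<noteq> y" "G (G y) \<noteq> y" using assms(2-4) by auto
qed

lemma f_gperm_gperm: "a \<in> A \<Longrightarrow> G (G (G a)) = a \<Longrightarrow> f (G (G a)) = B a"
  by (metis bar_f bar_bar f_in gperm_in)

lemma f_gperm:
  assumes "a \<in> A" "G (G (G a)) = a"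
  shows "f (G a) = G (f (B a))"
proof -
  have "G (G a) = f (f (B a))"
    using f_gperm_gperm[OF assms] f_cube gperm_in assms(1) by metis
  then have "B (G (G a)) = G (f (B a))" using bar_f by simp
  then show ?thesis using bar_gperm gperm_in assms(1) by simp
qed

lemma f_f:
  assumes "a \<in> A" "G (G (G (B a))) = B a"
  shows "f (f a) = G (G (B a))"
proof -
  have "f (G (G (B a))) = a" using f_gperm_gperm[OF bar_in assms(2)] bar_bar assms(1) by simp
  then show ?thesis using f_cube bar_in gperm_in assms(1) by metis
qed

definition tet_hom :: "(tarrow \<Rightarrow> 'a) \<Rightarrow> bool" where
  "tet_hom \<psi> \<longleftrightarrow> (\<forall>x. \<psi> x \<in> A \<and> \<psi> (tet_f x) = f (\<psi> x) \<and> \<psi> (tet_bar x) = B (\<psi> x))"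

text \<open>The \<open>g\<close>-orbits of \<open>\<alpha>, \<sigma>, \<nu>, \<epsilon>\<close>, which exhaust the tetrahedral arrows, are sent to
  the \<open>g\<close>-orbits of \<open>b, bar b, f b, f (bar b)\<close>.\<close>

definition tet_embed :: "'a \<Rightarrow> tarrow \<Rightarrow> 'a" where
  "tet_embed b x = (case x of
      T_alpha \<Rightarrow> b | T_delta \<Rightarrow> G b | T_xi \<Rightarrow> G (G b)
    | T_sigma \<Rightarrow> B b | T_rho \<Rightarrow> G (B b) | T_mu \<Rightarrow> G (G (B b))
    | T_nu \<Rightarrow> f b | T_omega \<Rightarrow> G (f b) | T_gamma \<Rightarrow> G (G (f b))
    | T_eps \<Rightarrow> f (B b) | T_eta \<Rightarrow> G (f (B b)) | T_beta \<Rightarrow> G (G (f (B b))))"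

lemma tet_hom_tet_embed:
  assumes b: "b \<in> A"
    and cube: "G (G (G b)) = b" "G (G (G (B b))) = B b"
      "G (G (G (f b))) = f b" "G (G (G (f (B b)))) = f (B b)"
  shows "tet_hom (tet_embed b)"
  unfolding tet_hom_def
proof (intro allI conjI)
  note closed = b bar_in f_in gperm_in
  note rules = cube bar_f bar_gperm bar_bar f_cube f_gperm f_f
  fix x
  show "tet_embed b x \<in> A" by (cases x) (simp_all add: tet_embed_def closed)
  show "tet_embed b (tet_f x) = f (tet_embed b x)"
    by (cases x) (simp_all add: tet_embed_def closed rules)
  show "tet_embed b (tet_bar x) = B (tet_embed b x)"
    by (cases x) (simp_all add: tet_embed_def closed rules)
qed

lemma tet_homD:
  assumes "tet_hom \<psi>"
  shows "\<psi> x \<in> A" and "\<psi> (tet_f x) = f (\<psi> x)" and "\<psi> (tet_bar x) = B (\<psi> x)"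
  using assms by (simp_all add: tet_hom_def)

lemma tet_hom_gperm: "tet_hom \<psi> \<Longrightarrow> \<psi> (tet_g x) = G (\<psi> x)"
  by (simp add: tet_homD tet_g_def bar_f)

lemma tet_hom_apply_word:
  "tet_hom \<psi> \<Longrightarrow> \<psi> x = \<psi> y \<Longrightarrow>
    \<psi> (apply_word tet_f tet_bar w x) = \<psi> (apply_word tet_f tet_bar w y)"
  using apply_word_hom[of \<psi> tet_f f tet_bar B] tet_homD by metis

lemma range_tet_hom:
  assumes hom: "tet_hom \<psi>"
  shows "range \<psi> = A"
proof -
  have in_range: "a \<in> range \<psi>" if a: "a \<in> A" and "s a \<in> s ` range \<psi>" for a
  proof -
    obtain x where "s a = s (\<psi> x)" using \<open>s a \<in> s ` range \<psi>\<close> by blast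
    then have "a = \<psi> x \<or> a = \<psi> (tet_bar x)"
      using source_eq_iff[of "\<psi> x" a] tet_homD[OF hom] a by auto
    then show ?thesis by blast
  qed
  have "v \<in> s ` range \<psi>" if "v \<in> V" for v
  proof -
    have "(s (\<psi> T_alpha), v) \<in> ({(s a, t a) | a. a \<in> A} \<union> {(t a, s a) | a. a \<in> A})\<^sup>*"
      using connected that tet_homD(1)[OF hom] ends_in_V unfolding quiver_connected_def by blast
    then show ?thesis
    proof (induction rule: rtrancl_induct)
      case base
      then show ?case by blast
    next
      case (step u w)
      from step.hyps(2) show ?case
      proof
        assume "(u, w) \<in> {(s a, t a) | a. a \<in> A}"
        then obtain a where a: "a \<in> A" "u = s a" "w = t a" by blast
        then obtain x where "a = \<psi> x" using in_range step.IH by blast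
        then have "w = s (\<psi> (tet_f x))" using a tet_homD[OF hom] source_f by simp
        then show ?case by blast
      next
        assume "(u, w) \<in> {(t a, s a) | a. a \<in> A}"
        then obtain a where a: "a \<in> A" "u = t a" "w = s a" by blast
        then have "f a \<in> range \<psi>" using in_range[OF f_in] step.IH source_f by simp
        then obtain x where "\<psi> x = f a" by auto
        then have "a = \<psi> (tet_f (tet_f x))" using tet_homD[OF hom] f_cube a(1) by simp
        then show ?case using a by blast
      qed
    qed
  qed
  then show ?thesis using in_range tet_homD(1)[OF hom] V_eq_sources by auto
qed

text \<open>If \<open>\<psi> x = \<psi> y\<close> with \<open>x \<noteq> y\<close>, a word moves the pair to \<open>(p, q)\<close> with \<open>q\<close> equal to
  \<open>bar p\<close>, \<open>g p\<close> or \<open>g\<^sup>2 p\<close>; but \<open>\<psi> q = \<psi> p\<close> while bar, \<open>g\<close> and \<open>g\<^sup>2\<close> move \<open>\<psi> p\<close>.\<close>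

lemma inj_tet_hom:
  assumes hom: "tet_hom \<psi>"
    and no_short_cycle: "\<And>x. G (\<psi> x) \<noteq> \<psi> x \<and> G (G (\<psi> x)) \<noteq> \<psi> x"
  shows "inj \<psi>"
proof (rule injI, rule ccontr)
  fix x y assume eq: "\<psi> x = \<psi> y" and "x \<noteq> y"
  then obtain w where w: "apply_word tet_f tet_bar w y \<in>
    {tet_bar (apply_word tet_f tet_bar w x), tet_g (apply_word tet_f tet_bar w x),
     tet_g (tet_g (apply_word tet_f tet_bar w x))}"
    using tet_distinct_pair_word by blast
  define p where "p = apply_word tet_f tet_bar w x"
  have "\<psi> (apply_word tet_f tet_bar w y) = \<psi> p"
    using tet_hom_apply_word[OF hom eq] p_def by simp
  then have "\<psi> p \<in> {B (\<psi> p), G (\<psi> p), G (G (\<psi> p))}"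
    using w tet_homD[OF hom] tet_hom_gperm[OF hom] unfolding p_def by auto
  then show False using no_short_cycle[of p] bar_neq[OF tet_homD(1)[OF hom, of p]]
    by (metis empty_iff insertE)
qed

lemma tetrahedral_if_bij_tet_hom:
  assumes hom: "tet_hom \<psi>" and "inj \<psi>"
  shows "is_tetrahedral V A s t f"
proof -
  have bij: "bij_betw \<psi> UNIV A" using assms range_tet_hom by (simp add: bij_betw_def)
  have source: "s (\<psi> y) = s (\<psi> x) \<longleftrightarrow> tet_s y = tet_s x" for x y
  proof -
    have "s (\<psi> y) = s (\<psi> x) \<longleftrightarrow> \<psi> y = \<psi> x \<or> \<psi> y = \<psi> (tet_bar x)"
      using source_eq_iff[of "\<psi> x" "\<psi> y"] tet_homD[OF hom] by simp
    also have "\<dots> \<longleftrightarrow> tet_s y = tet_s x"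
      using \<open>inj \<psi>\<close> tet_s_eq_iff[of y x] by (auto dest: injD)
    finally show ?thesis .
  qed
  define \<phi> where "\<phi> v = tet_s (SOME x. s (\<psi> x) = v)" for v
  have \<phi>: "\<phi> (s (\<psi> x)) = tet_s x" for x
    unfolding \<phi>_def using someI[of "\<lambda>y. s (\<psi> y) = s (\<psi> x)" x] source by simp
  have V: "V = s ` range \<psi>" using V_eq_sources range_tet_hom[OF hom] by simp
  have "bij_betw \<phi> V {1..6}"
  proof (rule bij_betw_imageI)
    show "inj_on \<phi> V" using V \<phi> source by (auto intro!: inj_onI)
    show "\<phi> ` V = {1..6}" using V \<phi> range_tet_s by (simp add: image_image)
  qed
  moreover have "bij_betw (inv \<psi>) A UNIV" using bij_betw_inv_into[OF bij] by simp
  moreover have "\<forall>a\<in>A. tet_s (inv \<psi> a) = \<phi> (s a) \<and> tet_t (inv \<psi> a) = \<phi> (t a)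
      \<and> inv \<psi> (f a) = tet_f (inv \<psi> a)"
  proof
    fix a assume "a \<in> A"
    then obtain x where a: "a = \<psi> x" using range_tet_hom[OF hom] by blast
    have fa: "f a = \<psi> (tet_f x)" using tet_homD(2)[OF hom] a by simp
    moreover have "t a = s (f a)" using source_f \<open>a \<in> A\<close> by simp
    ultimately show "tet_s (inv \<psi> a) = \<phi> (s a) \<and> tet_t (inv \<psi> a) = \<phi> (t a)
      \<and> inv \<psi> (f a) = tet_f (inv \<psi> a)"
      using a \<phi> \<open>inj \<psi>\<close> tet_s_tet_f by simp
  qed
  ultimately show ?thesis unfolding is_tetrahedral_def tq_iso_def by blast
qed

lemma gperm_cube_if_tetrahedral:
  assumes "is_tetrahedral V A s t f" and a: "a \<in> A"
  shows "G (G (G a)) = a \<and> G a \<noteq> a"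
proof -
  obtain \<phi> \<chi> where bij: "bij_betw \<chi> A (UNIV :: tarrow set)"
    and iso: "\<forall>a\<in>A. tet_s (\<chi> a) = \<phi> (s a) \<and> \<chi> (f a) = tet_f (\<chi> a)"
    using assms(1) unfolding is_tetrahedral_def tq_iso_def by blast
  have inj: "inj_on \<chi> A" using bij bij_betw_def by blast
  have \<chi>_bar: "\<chi> (B a) = tet_bar (\<chi> a)" if a: "a \<in> A" for a
  proof -
    have "tet_s (\<chi> (B a)) = tet_s (\<chi> a)" using iso a bar_in source_bar by metis
    moreover have "\<chi> (B a) \<noteq> \<chi> a" using inj a bar_in bar_neq inj_onD by metis
    ultimately show ?thesis using tet_s_eq_iff by blast
  qed
  have \<chi>_gperm: "\<chi> (G a) = tet_g (\<chi> a)" if "a \<in> A" for a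
    using \<chi>_bar[OF f_in] iso that by (simp add: gperm_def tet_g_def)
  have "\<chi> (G (G (G a))) = \<chi> a" using \<chi>_gperm a gperm_in tet_g_cube by simp
  then have "G (G (G a)) = a" using inj a gperm_in inj_onD by metis
  moreover have "G a \<noteq> a" using \<chi>_gperm[OF a] tet_g_neq by metis
  ultimately show ?thesis ..
qed

text \<open>A fixed point of \<open>g\<close> identifies \<open>\<alpha>\<close> with \<open>\<delta>\<close> in the tetrahedral picture built on it,
  which collapses all twelve arrows onto arrows starting at two vertices.\<close>

lemma gperm_neq_if_gperm_cube:
  assumes cube: "\<forall>a\<in>A. G (G (G a)) = a" and "card V \<ge> 3" and c: "c \<in> A"
  shows "G c \<noteq> c"
proof
  assume fixed: "G c = c"
  define \<psi> where "\<psi> = tet_embed c"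
  have hom: "tet_hom \<psi>"
    unfolding \<psi>_def using tet_hom_tet_embed c cube bar_in f_in by simp
  have "\<psi> T_delta = \<psi> T_alpha" using fixed by (simp add: \<psi>_def tet_embed_def)
  then have W: "\<psi> (apply_word tet_f tet_bar w T_delta) = \<psi> (apply_word tet_f tet_bar w T_alpha)"
    for w using tet_hom_apply_word[OF hom] by blast
  have collapse: "\<psi> T_delta = \<psi> T_alpha" "\<psi> T_xi = \<psi> T_alpha" "\<psi> T_eta = \<psi> T_sigma"
    "\<psi> T_nu = \<psi> T_sigma" "\<psi> T_eps = \<psi> T_gamma" "\<psi> T_mu = \<psi> T_gamma"
    "\<psi> T_rho = \<psi> T_beta" "\<psi> T_omega = \<psi> T_beta"
    using W[of "[]"] W[of "[True, True, False]"] W[of "[True, False, True]"] W[of "[False]"]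
      W[of "[True, True, False, True]"] W[of "[True, True]"] W[of "[True, False, True, True]"]
      W[of "[False, True, True]"]
    by simp_all
  have "s (\<psi> T_sigma) = s (\<psi> T_alpha)" "s (\<psi> T_gamma) = s (\<psi> T_beta)"
    using tet_homD(3)[OF hom, of T_alpha] tet_homD(3)[OF hom, of T_beta]
      source_bar[OF tet_homD(1)[OF hom]] by simp_all
  then have "s (\<psi> x) \<in> {s (\<psi> T_alpha), s (\<psi> T_beta)}" for x
    using collapse by (cases x) simp_all
  then have "V \<subseteq> {s (\<psi> T_alpha), s (\<psi> T_beta)}"
    using V_eq_sources range_tet_hom[OF hom] by blast
  then have "card V \<le> card {s (\<psi> T_alpha), s (\<psi> T_beta)}" by (rule card_mono[rotated]) simp
  also have "\<dots> \<le> 2" by (simp add: card_insert_if)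
  finally show False using \<open>card V \<ge> 3\<close> by simp
qed

lemma tetrahedral_if_norb_eq_3:
  assumes b: "b \<in> A" and "norb A s f b = 3" "norb A s f (B b) = 3"
    "norb A s f (f b) = 3" "norb A s f (f (B b)) = 3"
  shows "is_tetrahedral V A s t f"
proof -
  have orbit: "a \<in> A \<and> G (G (G a)) = a \<and> G a \<noteq> a" if "a \<in> {b, B b, f b, f (B b)}" for a
  proof -
    have "a \<in> A" using that b bar_in f_in by blast
    moreover have "norb A s f a = 3" using that assms(2-5) by blast
    ultimately show ?thesis using norb_eq_3_iff by blast
  qed
  define \<psi> where "\<psi> = tet_embed b"
  have hom: "tet_hom \<psi>" unfolding \<psi>_def using tet_hom_tet_embed orbit by simp
  have "G (\<psi> x) \<noteq> \<psi> x \<and> G (G (\<psi> x)) \<noteq> \<psi> x" for x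
  proof -
    have "\<exists>a\<in>{b, B b, f b, f (B b)}. \<psi> x \<in> {a, G a, G (G a)}"
      by (cases x) (simp_all add: \<psi>_def tet_embed_def)
    then obtain a where "a \<in> {b, B b, f b, f (B b)}" "\<psi> x \<in> {a, G a, G (G a)}" by blast
    then show ?thesis using orbit gperm_orbit_distinct by meson
  qed
  then show ?thesis using tetrahedral_if_bij_tet_hom[OF hom inj_tet_hom[OF hom]] by blast
qed

end

theorem lemma6p6:
  fixes V :: "'v set" and A :: "'a set" and s t :: "'a \<Rightarrow> 'v" and f :: "'a \<Rightarrow> 'a"
  assumes "triangulation_quiver V A s t f"
    and "card V \<ge> 3"
  shows "(is_tetrahedral V A s t f \<longleftrightarrow> (\<forall>a\<in>A. norb A s f a = 3))
    \<and> ((\<forall>a\<in>A. norb A s f a = 3) \<longleftrightarrow> (\<forall>a\<in>A. gperm A s f (gperm A s f (gperm A s f a)) = a))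
    \<and> ((\<forall>a\<in>A. gperm A s f (gperm A s f (gperm A s f a)) = a) \<longleftrightarrow>
       (\<exists>b\<in>A. norb A s f b = 3 \<and> norb A s f (bar A s b) = 3 \<and>
              norb A s f (f b) = 3 \<and> norb A s f (f (bar A s b)) = 3))"
proof -
  interpret triangulation V A s t f using assms(1) by unfold_locales
  let ?i = "is_tetrahedral V A s t f"
  let ?ii = "\<forall>a\<in>A. norb A s f a = 3"
  let ?iii = "\<forall>a\<in>A. G (G (G a)) = a"
  let ?iv = "\<exists>b\<in>A. norb A s f b = 3 \<and> norb A s f (B b) = 3 \<and>
    norb A s f (f b) = 3 \<and> norb A s f (f (B b)) = 3"
  have i_ii: "?i \<Longrightarrow> ?ii" using gperm_cube_if_tetrahedral norb_eq_3_iff by blast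
  have ii_iii: "?ii \<Longrightarrow> ?iii" using norb_eq_3_iff by blast
  have iii_ii: "?iii \<Longrightarrow> ?ii" using norb_eq_3_iff gperm_neq_if_gperm_cube assms(2) by blast
  have "A \<noteq> {}" using assms(2) V_eq_sources by auto
  then have ii_iv: "?ii \<Longrightarrow> ?iv" using bar_in f_in by blast
  have iv_i: "?iv \<Longrightarrow> ?i" using tetrahedral_if_norb_eq_3 by blast
  show ?thesis using i_ii ii_iii iii_ii ii_iv iv_i by blast
qed

end
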